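(* Let $(G_s)_{s\le0}$ be an unfolding sequence in which every graph is isomorphic to $G_0=G$ via fixed isomorphisms, and for an edge $e$ of $G$ let $e_s$ denote the corresponding edge of $G_s$. If $(G_s)_{s\le0}$ is reduced, then for all edges $e,e'$ of $G$ and every $K>0$ there exists $N<0$ such that for each $s<N$, $\langle e'_0,\phi_{s,0}(e_s)\rangle>K$.
   Context: A graph is a finite 1-dimensional CW complex; a morphism maps vertices to vertices and is locally injective on edge interiors. An unfolding sequence is $(G_s)_{s\le0}$ of finite connected graphs of rank at least 2 with morphisms $G_s\to G_{s+1}$ that are homotopy equivalences, all compositions $\phi_{r,s}:G_r\to G_s$ ($r<s$) being morphisms. It is reduced if whenever subgraphs $H_t\subset G_t$ and $s_0<0$ satisfy $\phi_{r,s}(H_r)\subseteq H_s$ for all $r<s\le s_0$, then either $H_s=G_s$ for all $s\le s_0$ or $H_s$ contains no edges for all large $-s$. For finite directed edge paths $\gamma,\omega$, $\langle\gamma,\omega\rangle$ is the number of times $\gamma$ appears as a (directed) subpath of $\omega$.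
   Formalization: The count $\langle e'_0,\phi_{s,0}(e_s)\rangle$ is taken over both orientations of e': it is the number of occurrences of $e'_0$ plus the number of occurrences of its reverse as subpaths of $\phi_{s,0}(e_s)$. The statement above fails without it. *)

theory Defs
  imports Complex_Main
begin

text \<open>Combinatorial model of a finite graph (1-dimensional CW complex):
  vertex set V, set E of directed edges, origin map src, fixed-point-free
  involution rv (edge reversal). Loops and multiple edges are allowed.\<close>

definition tgt :: "('e \<Rightarrow> 'v) \<Rightarrow> ('e \<Rightarrow> 'e) \<Rightarrow> 'e \<Rightarrow> 'v" where
  "tgt src rv e = src (rv e)"

definition is_graph :: "'v set \<Rightarrow> 'e set \<Rightarrow> ('e \<Rightarrow> 'v) \<Rightarrow> ('e \<Rightarrow> 'e) \<Rightarrow> bool" where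
  "is_graph V E src rv \<longleftrightarrow> finite V \<and> finite E \<and>
     (\<forall>e\<in>E. rv e \<in> E \<and> rv e \<noteq> e \<and> rv (rv e) = e \<and> src e \<in> V)"

definition is_path :: "'e set \<Rightarrow> ('e \<Rightarrow> 'v) \<Rightarrow> ('e \<Rightarrow> 'e) \<Rightarrow> 'e list \<Rightarrow> bool" where
  "is_path E src rv p \<longleftrightarrow> set p \<subseteq> E \<and>
     (\<forall>i. Suc i < length p \<longrightarrow> tgt src rv (p ! i) = src (p ! Suc i))"

definition reduced_path :: "('e \<Rightarrow> 'e) \<Rightarrow> 'e list \<Rightarrow> bool" where
  "reduced_path rv p \<longleftrightarrow> (\<forall>i. Suc i < length p \<longrightarrow> p ! Suc i \<noteq> rv (p ! i))"

definition rev_path :: "('e \<Rightarrow> 'e) \<Rightarrow> 'e list \<Rightarrow> 'e list" where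
  "rev_path rv p = rev (map rv p)"

fun freered :: "('e \<Rightarrow> 'e) \<Rightarrow> 'e list \<Rightarrow> 'e list" where
  "freered rv [] = []"
| "freered rv (x # xs) =
     (case freered rv xs of [] \<Rightarrow> [x] | y # ys \<Rightarrow> (if y = rv x then ys else x # y # ys))"

definition connected_graph :: "'v set \<Rightarrow> 'e set \<Rightarrow> ('e \<Rightarrow> 'v) \<Rightarrow> ('e \<Rightarrow> 'e) \<Rightarrow> bool" where
  "connected_graph V E src rv \<longleftrightarrow> (\<forall>u\<in>V. \<forall>w\<in>V. \<exists>p. is_path E src rv p \<and>
      (p = [] \<longrightarrow> u = w) \<and> (p \<noteq> [] \<longrightarrow> src (hd p) = u \<and> tgt src rv (last p) = w))"

text \<open>Rank of a connected graph = 1 - Euler characteristic = #edges - #vertices + 1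
  (each geometric edge corresponds to two directed edges).\<close>
definition graph_rank :: "'v set \<Rightarrow> 'e set \<Rightarrow> int" where
  "graph_rank V E = int (card E) div 2 - int (card V) + 1"

text \<open>A map G \<rightarrow> G: vertex map and, for each directed edge, its image edge path.\<close>
type_synonym ('v, 'e) gmap = "('v \<Rightarrow> 'v) \<times> ('e \<Rightarrow> 'e list)"

text \<open>Morphism: vertices to vertices, each edge to a nonempty reduced edge path
  (= locally injective on the edge interior), compatible with endpoints and reversal.\<close>
definition is_morphism :: "'v set \<Rightarrow> 'e set \<Rightarrow> ('e \<Rightarrow> 'v) \<Rightarrow> ('e \<Rightarrow> 'e) \<Rightarrow> ('v, 'e) gmap \<Rightarrow> bool" where
  "is_morphism V E src rv g \<longleftrightarrow> (\<forall>v\<in>V. fst g v \<in> V) \<and>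
     (\<forall>e\<in>E. snd g e \<noteq> [] \<and> is_path E src rv (snd g e) \<and> reduced_path rv (snd g e) \<and>
        src (hd (snd g e)) = fst g (src e) \<and> tgt src rv (last (snd g e)) = fst g (tgt src rv e) \<and>
        snd g (rv e) = rev_path rv (snd g e))"

definition path_image :: "('v, 'e) gmap \<Rightarrow> 'e list \<Rightarrow> 'e list" where
  "path_image g p = concat (map (snd g) p)"

text \<open>Reduced closed edge paths at v: the elements of the fundamental group pi_1(G, v).\<close>
definition loops_at :: "'e set \<Rightarrow> ('e \<Rightarrow> 'v) \<Rightarrow> ('e \<Rightarrow> 'e) \<Rightarrow> 'v \<Rightarrow> 'e list set" where
  "loops_at E src rv v = {p. is_path E src rv p \<and> reduced_path rv p \<and>
      (p \<noteq> [] \<longrightarrow> src (hd p) = v \<and> tgt src rv (last p) = v)}"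

text \<open>Homotopy equivalence (between connected graphs, i.e. aspherical spaces, this is
  equivalent to inducing isomorphisms on fundamental groups, by Whitehead's theorem).\<close>
definition is_homotopy_equiv :: "'v set \<Rightarrow> 'e set \<Rightarrow> ('e \<Rightarrow> 'v) \<Rightarrow> ('e \<Rightarrow> 'e) \<Rightarrow> ('v, 'e) gmap \<Rightarrow> bool" where
  "is_homotopy_equiv V E src rv g \<longleftrightarrow> (\<forall>v\<in>V.
     bij_betw (\<lambda>p. freered rv (path_image g p)) (loops_at E src rv v) (loops_at E src rv (fst g v)))"

definition gid :: "('v, 'e) gmap" where
  "gid = (id, \<lambda>e. [e])"

text \<open>gcomp g h = g \<circ> h (apply h first).\<close>
definition gcomp :: "('v, 'e) gmap \<Rightarrow> ('v, 'e) gmap \<Rightarrow> ('v, 'e) gmap" where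
  "gcomp g h = (fst g \<circ> fst h, \<lambda>e. path_image g (snd h e))"

text \<open>All graphs G_s are identified with G via the fixed isomorphisms; the level s = -n
  is indexed by the natural number n.  f k is the map G_{-(k+1)} \<rightarrow> G_{-k}.
  phi f n m (n \<le> m) is the composition G_{-m} \<rightarrow> G_{-n}, i.e. phi_{-m,-n}.\<close>
fun phi :: "(nat \<Rightarrow> ('v, 'e) gmap) \<Rightarrow> nat \<Rightarrow> nat \<Rightarrow> ('v, 'e) gmap" where
  "phi f n 0 = gid"
| "phi f n (Suc m) = (if Suc m \<le> n then gid else gcomp (phi f n m) (f m))"

definition unfolding_seq :: "'v set \<Rightarrow> 'e set \<Rightarrow> ('e \<Rightarrow> 'v) \<Rightarrow> ('e \<Rightarrow> 'e) \<Rightarrow> (nat \<Rightarrow> ('v, 'e) gmap) \<Rightarrow> bool" where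
  "unfolding_seq V E src rv f \<longleftrightarrow> is_graph V E src rv \<and> connected_graph V E src rv \<and>
     graph_rank V E \<ge> 2 \<and>
     (\<forall>k. is_morphism V E src rv (f k) \<and> is_homotopy_equiv V E src rv (f k)) \<and>
     (\<forall>n m. n < m \<longrightarrow> is_morphism V E src rv (phi f n m))"

definition is_subgraph :: "'v set \<Rightarrow> 'e set \<Rightarrow> ('e \<Rightarrow> 'v) \<Rightarrow> ('e \<Rightarrow> 'e) \<Rightarrow> 'v set \<times> 'e set \<Rightarrow> bool" where
  "is_subgraph V E src rv H \<longleftrightarrow> fst H \<subseteq> V \<and> snd H \<subseteq> E \<and>
     (\<forall>e\<in>snd H. rv e \<in> snd H \<and> src e \<in> fst H)"

definition maps_into :: "('v, 'e) gmap \<Rightarrow> 'v set \<times> 'e set \<Rightarrow> 'v set \<times> 'e set \<Rightarrow> bool" where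
  "maps_into g H H' \<longleftrightarrow> fst g ` fst H \<subseteq> fst H' \<and> (\<forall>e\<in>snd H. set (snd g e) \<subseteq> snd H')"

text \<open>Reduced: s_0 = -n0 < 0 corresponds to n0 \<ge> 1; r < s \<le> s_0 to n0 \<le> n < m.\<close>
definition reduced_seq :: "'v set \<Rightarrow> 'e set \<Rightarrow> ('e \<Rightarrow> 'v) \<Rightarrow> ('e \<Rightarrow> 'e) \<Rightarrow> (nat \<Rightarrow> ('v, 'e) gmap) \<Rightarrow> bool" where
  "reduced_seq V E src rv f \<longleftrightarrow> (\<forall>(H :: nat \<Rightarrow> 'v set \<times> 'e set) n0.
     (\<forall>n. is_subgraph V E src rv (H n)) \<and> n0 \<ge> 1 \<and>
     (\<forall>n m. n0 \<le> n \<and> n < m \<longrightarrow> maps_into (phi f n m) (H m) (H n)) \<longrightarrow>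
     (\<forall>n\<ge>n0. H n = (V, E)) \<or> (\<exists>M. \<forall>n\<ge>M. snd (H n) = {}))"

text \<open>\<langle>\<gamma>,\<omega>\<rangle>: number of occurrences of \<gamma> as a subpath of \<omega>.\<close>
definition occ :: "'e list \<Rightarrow> 'e list \<Rightarrow> nat" where
  "occ \<gamma> \<omega> = card {i. i + length \<gamma> \<le> length \<omega> \<and> take (length \<gamma>) (drop i \<omega>) = \<gamma>}"

end

theory Submission
  imports Defs
begin

text \<open>Reducedness is used through a single dichotomy: a property of edges, indexed by the
  level, which is closed under reversal and pulled back along the maps \<open>\<phi>\<^sub>n\<^sub>,\<^sub>m\<close> defines an
  invariant family of subgraphs, so it either holds for all edges at all levels or eventually
  fails for all edges.  Applied to ``\<open>\<phi>\<^sub>N\<^sub>,\<^sub>m(x)\<close> is a single edge \<open>y\<^sup>\<plusminus>\<^sup>1\<close>'' it shows that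
  images of edges become arbitrarily long.  Applied to ``\<open>\<phi>\<^sub>0\<^sub>,\<^sub>n(x)\<close> crosses \<open>e'\<close> (in either
  direction) at most \<open>T\<close> times'' it shows that either the counts eventually exceed \<open>T\<close> for all edges, or they are bounded by \<open>T\<close> at
  every level.  The second alternative is impossible: the counts are eventually positive
  (with \<open>T = 0\<close>, the first alternative would mean that \<open>f\<^sub>0\<close> misses \<open>e'\<close>, although a homotopy
  equivalence covers every edge of a reduced loop, and \<open>e'\<close> lies on one because it occurs
  twice in the long reduced path \<open>\<phi>\<^sub>1\<^sub>,\<^sub>m(e')\<close>), and counts are additive along \<open>\<phi>\<close>, so long
  images push them above any bound.\<close>

section \<open>Edge paths\<close>

definition path_from_to :: "'e set \<Rightarrow> ('e \<Rightarrow> 'v) \<Rightarrow> ('e \<Rightarrow> 'e) \<Rightarrow> 'e list \<Rightarrow> 'v \<Rightarrow> 'v \<Rightarrow> bool" where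
  "path_from_to E src rv p u w \<longleftrightarrow> is_path E src rv p \<and> (p = [] \<longrightarrow> u = w) \<and>
     (p \<noteq> [] \<longrightarrow> src (hd p) = u \<and> tgt src rv (last p) = w)"

definition cyclically_reduced :: "('e \<Rightarrow> 'e) \<Rightarrow> 'e list \<Rightarrow> bool" where
  "cyclically_reduced rv L \<longleftrightarrow> reduced_path rv L \<and> (L \<noteq> [] \<longrightarrow> hd L \<noteq> rv (last L))"

lemma is_path_iff_successively:
  "is_path E src rv p \<longleftrightarrow> set p \<subseteq> E \<and> successively (\<lambda>a b. tgt src rv a = src b) p"
  unfolding is_path_def successively_conv_nth by auto

lemma reduced_path_iff_successively:
  "reduced_path rv p \<longleftrightarrow> successively (\<lambda>a b. b \<noteq> rv a) p"
  unfolding reduced_path_def successively_conv_nth by auto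

lemma is_path_Cons:
  "is_path E src rv (x # xs) \<longleftrightarrow> x \<in> E \<and> is_path E src rv xs \<and> (xs \<noteq> [] \<longrightarrow> tgt src rv x = src (hd xs))"
  by (cases xs) (auto simp: is_path_iff_successively)

lemma reduced_path_append:
  "reduced_path rv (xs @ ys) \<longleftrightarrow> reduced_path rv xs \<and> reduced_path rv ys \<and>
     (xs \<noteq> [] \<longrightarrow> ys \<noteq> [] \<longrightarrow> hd ys \<noteq> rv (last xs))"
  unfolding reduced_path_iff_successively successively_append_iff by auto

lemma reduced_path_Cons:
  "reduced_path rv (x # xs) \<longleftrightarrow> reduced_path rv xs \<and> (xs \<noteq> [] \<longrightarrow> hd xs \<noteq> rv x)"
  using reduced_path_append[of rv "[x]" xs] by (simp add: reduced_path_def)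

lemma is_path_infix: "is_path E src rv (xs @ ys @ zs) \<Longrightarrow> is_path E src rv ys"
  unfolding is_path_iff_successively successively_append_iff by auto

lemma reduced_path_infix: "reduced_path rv (xs @ ys @ zs) \<Longrightarrow> reduced_path rv ys"
  by (simp add: reduced_path_append)

lemma reduced_path_take: "reduced_path rv p \<Longrightarrow> reduced_path rv (take k p)"
  by (metis append_take_drop_id reduced_path_append)

lemma path_from_to_Nil [simp]: "path_from_to E src rv [] u w \<longleftrightarrow> u = w"
  unfolding path_from_to_def is_path_def by simp

lemma path_from_to_Cons [simp]:
  "path_from_to E src rv (x # xs) u w \<longleftrightarrow>
     x \<in> E \<and> src x = u \<and> path_from_to E src rv xs (tgt src rv x) w"
  unfolding path_from_to_def by (cases xs) (auto simp: is_path_Cons)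

lemma path_from_to_append:
  "path_from_to E src rv (p @ q) u w \<longleftrightarrow>
     (\<exists>x. path_from_to E src rv p u x \<and> path_from_to E src rv q x w)"
  by (induction p arbitrary: u) auto

lemma is_path_imp_path_from_to:
  "is_path E src rv p \<Longrightarrow> p \<noteq> [] \<Longrightarrow> path_from_to E src rv p (src (hd p)) (tgt src rv (last p))"
  unfolding path_from_to_def by simp

lemma path_from_to_start: "path_from_to E src rv p u w \<Longrightarrow> u \<in> insert w (src ` set p)"
  by (cases p) auto

lemma tgt_in_path_sources:
  "path_from_to E src rv p u w \<Longrightarrow> z \<in> set p \<Longrightarrow> tgt src rv z \<in> insert w (src ` set p)"
proof (induction p arbitrary: u)
  case (Cons x xs)
  then show ?case using path_from_to_start[of E src rv xs "tgt src rv x" w] by auto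
qed simp

lemma path_first_entry:
  assumes "path_from_to E src rv p u w" "w \<in> S"
  obtains k q where "q \<in> S" "path_from_to E src rv (take k p) u q" "\<forall>y\<in>set (take k p). src y \<notin> S"
  using assms
proof (induction p arbitrary: u thesis)
  case Nil
  then show ?case using Nil.prems(1)[of w 0] by simp
next
  case (Cons x xs)
  show ?case
  proof (cases "u \<in> S")
    case True
    then show ?thesis using Cons.prems(1)[of u 0] by simp
  next
    case False
    obtain k q where "q \<in> S" "path_from_to E src rv (take k xs) (tgt src rv x) q"
        "\<forall>y\<in>set (take k xs). src y \<notin> S"
      using Cons.IH Cons.prems(2,3) by auto
    then show ?thesis using Cons.prems(1)[of q "Suc k"] Cons.prems(2) False by auto
  qed
qed

lemma occ_singleton: "occ [c] P = length (filter (\<lambda>y. y = c) P)"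
proof -
  have "{i. i + length [c] \<le> length P \<and> take (length [c]) (drop i P) = [c]} = {i. i < length P \<and> P ! i = c}"
    by (auto simp: Cons_nth_drop_Suc take_Suc_conv_app_nth)
  then show ?thesis unfolding occ_def by (simp add: length_filter_conv_card)
qed

definition occ_undirected :: "('e \<Rightarrow> 'e) \<Rightarrow> 'e \<Rightarrow> 'e list \<Rightarrow> nat" where
  "occ_undirected rv c P = length (filter (\<lambda>y. y = c \<or> y = rv c) P)"

lemma occ_undirected_eq_occ:
  "c \<noteq> rv c \<Longrightarrow> occ_undirected rv c P = occ [c] P + occ [rv c] P"
  unfolding occ_undirected_def occ_singleton by (induction P) auto

lemma occ_undirected_le_occ: "occ_undirected rv c P \<le> occ [c] P + occ [rv c] P"
  unfolding occ_undirected_def occ_singleton by (induction P) auto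

lemma occ_undirected_path_image:
  "occ_undirected rv c (path_image g p) = (\<Sum>y\<leftarrow>p. occ_undirected rv c (snd g y))"
  unfolding occ_undirected_def path_image_def by (induction p) auto

lemma split_list_twice:
  assumes "2 \<le> occ [d] P"
  obtains xs ys zs where "P = xs @ d # ys @ d # zs"
proof -
  have "filter (\<lambda>y. y = d) P \<noteq> []" using assms by (auto simp: occ_singleton)
  then obtain xs rest where P: "P = xs @ d # rest" "d \<notin> set xs"
    using split_list_first[of d P] by (auto simp: filter_empty_conv)
  then have "filter (\<lambda>y. y = d) xs = []" by (auto simp: filter_empty_conv)
  then have "filter (\<lambda>y. y = d) rest \<noteq> []" using assms P by (auto simp: occ_singleton)
  then obtain ys zs where "rest = ys @ d # zs" by (auto simp: filter_empty_conv dest: split_list)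
  then show thesis using that P by simp
qed

lemma length_mult_le_sum_list:
  fixes c :: nat
  shows "(\<And>y. y \<in> set xs \<Longrightarrow> c \<le> g y) \<Longrightarrow> length xs * c \<le> (\<Sum>y\<leftarrow>xs. g y)"
  using sum_list_mono[of xs "\<lambda>_. c" g] by (simp add: sum_list_triv)

section \<open>Compositions of the maps\<close>

lemma path_image_concat: "path_image g (concat xss) = concat (map (path_image g) xss)"
  unfolding path_image_def by (induction xss) auto

lemma gcomp_assoc: "gcomp (gcomp g h) k = gcomp g (gcomp h k)"
  unfolding gcomp_def by (simp add: path_image_def path_image_concat[unfolded path_image_def] comp_def)

lemma gcomp_gid: "gcomp g gid = g"
  unfolding gcomp_def gid_def path_image_def by (cases g) auto

lemma phi_eq_gid: "m \<le> n \<Longrightarrow> phi f n m = gid"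
  by (induction m) auto

lemma snd_phi_self [simp]: "snd (phi f n n) x = [x]"
  by (simp add: phi_eq_gid gid_def)

lemma snd_phi_Suc_self: "snd (phi f n (Suc n)) x = snd (f n) x"
  by (simp add: phi_eq_gid gcomp_def gid_def path_image_def)

lemma phi_trans: "n \<le> m \<Longrightarrow> m \<le> k \<Longrightarrow> phi f n k = gcomp (phi f n m) (phi f m k)"
proof (induction k)
  case 0
  then show ?case by (simp add: gcomp_gid)
next
  case (Suc k)
  show ?case
  proof (cases "m = Suc k")
    case True
    then show ?thesis by (simp add: phi_eq_gid gcomp_gid)
  next
    case False
    then show ?thesis using Suc by (simp add: gcomp_assoc)
  qed
qed

lemma snd_phi_trans:
  "n \<le> m \<Longrightarrow> m \<le> k \<Longrightarrow> snd (phi f n k) x = path_image (phi f n m) (snd (phi f m k) x)"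
  using phi_trans[of n m k f] unfolding gcomp_def by simp

lemma length_phi_trans:
  "n \<le> m \<Longrightarrow> m \<le> k \<Longrightarrow>
     length (snd (phi f n k) x) = (\<Sum>y\<leftarrow>snd (phi f m k) x. length (snd (phi f n m) y))"
  by (simp add: snd_phi_trans[of n m k f x] path_image_def length_concat comp_def)

lemma occ_undirected_phi_trans:
  "l \<le> n \<Longrightarrow> n \<le> m \<Longrightarrow> occ_undirected rv c (snd (phi f l m) x) =
     (\<Sum>y\<leftarrow>snd (phi f n m) x. occ_undirected rv c (snd (phi f l n) y))"
  by (simp add: snd_phi_trans[of l n m f x] occ_undirected_path_image)

section \<open>Reduced loops through a repeated edge\<close>

lemma loops_at_iff_path_from_to:
  "p \<in> loops_at E src rv v \<longleftrightarrow> path_from_to E src rv p v v \<and> reduced_path rv p"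
  unfolding loops_at_def path_from_to_def by auto

lemma rev_path_simps [simp]:
  "rev_path rv [] = []" "rev_path rv (x # xs) = rev_path rv xs @ [rv x]"
  unfolding rev_path_def by simp_all

lemma rev_path_eq_Nil_iff [simp]: "rev_path rv p = [] \<longleftrightarrow> p = []"
  unfolding rev_path_def by simp

lemma set_freered_subset: "set (freered rv p) \<subseteq> set p"
  by (induction p) (auto split: list.splits)

lemma homotopy_equiv_covers_loop:
  assumes "is_homotopy_equiv V E src rv g" "v \<in> V" "W \<in> loops_at E src rv (fst g v)" "d \<in> set W"
  obtains x where "x \<in> E" "d \<in> set (snd g x)"
proof -
  have "bij_betw (\<lambda>p. freered rv (path_image g p)) (loops_at E src rv v) (loops_at E src rv (fst g v))"
    using assms(1,2) unfolding is_homotopy_equiv_def by auto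
  then obtain \<gamma> where \<gamma>: "\<gamma> \<in> loops_at E src rv v" "W = freered rv (path_image g \<gamma>)"
    using assms(3) unfolding bij_betw_def by auto
  have "d \<in> set (path_image g \<gamma>)" using \<gamma>(2) assms(4) set_freered_subset[of rv "path_image g \<gamma>"] by auto
  moreover have "set \<gamma> \<subseteq> E" using \<gamma>(1) unfolding loops_at_def is_path_def by auto
  ultimately show thesis using that unfolding path_image_def by auto
qed

locale finite_graph =
  fixes V :: "'v set" and E :: "'e set" and src :: "'e \<Rightarrow> 'v" and rv :: "'e \<Rightarrow> 'e"
  assumes is_graph: "is_graph V E src rv"
begin

lemma finite_V: "finite V" and finite_E: "finite E"
  using is_graph unfolding is_graph_def by auto

lemma rv_in_E: "x \<in> E \<Longrightarrow> rv x \<in> E"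
  and rv_rv: "x \<in> E \<Longrightarrow> rv (rv x) = x"
  and rv_neq: "x \<in> E \<Longrightarrow> rv x \<noteq> x"
  and src_in_V: "x \<in> E \<Longrightarrow> src x \<in> V"
  using is_graph unfolding is_graph_def by auto

lemma src_rv: "src (rv x) = tgt src rv x"
  unfolding tgt_def by simp

lemma tgt_rv: "x \<in> E \<Longrightarrow> tgt src rv (rv x) = src x"
  unfolding tgt_def by (simp add: rv_rv)

lemma path_from_to_rev_path:
  "path_from_to E src rv p u w \<Longrightarrow> path_from_to E src rv (rev_path rv p) w u"
  by (induction p arbitrary: u) (auto simp: path_from_to_append rv_in_E src_rv tgt_rv)

lemma reduced_path_rev_path:
  assumes "set p \<subseteq> E" "reduced_path rv p"
  shows "reduced_path rv (rev_path rv p)"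
proof -
  have "successively (\<lambda>a b. b \<noteq> rv a) p"
    using assms(2) unfolding reduced_path_iff_successively .
  then have "successively (\<lambda>x y. rv x \<noteq> rv (rv y)) p"
    by (rule successively_mono) (use assms(1) rv_rv in auto)
  then show ?thesis
    unfolding reduced_path_iff_successively rev_path_def successively_rev successively_map .
qed

lemma hd_rev_path: "p \<noteq> [] \<Longrightarrow> hd (rev_path rv p) = rv (last p)"
  unfolding rev_path_def by (simp add: hd_rev last_map)

lemma occ_undirected_rev_path:
  assumes "c \<in> E" "set P \<subseteq> E"
  shows "occ_undirected rv c (rev_path rv P) = occ_undirected rv c P"
proof -
  have "(rv x = c \<or> rv x = rv c) \<longleftrightarrow> (x = c \<or> x = rv c)" if "x \<in> E" for x
    using rv_rv[OF that] rv_rv[OF assms(1)] by metis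
  then show ?thesis
    using assms(2) unfolding occ_undirected_def rev_path_def
    by (induction P) auto
qed

lemma freered_path_from_to:
  "path_from_to E src rv p u w \<Longrightarrow>
     path_from_to E src rv (freered rv p) u w \<and> reduced_path rv (freered rv p)"
proof (induction p arbitrary: u)
  case Nil
  then show ?case by (simp add: reduced_path_def)
next
  case (Cons x xs)
  then have x: "x \<in> E" "src x = u"
    and IH: "path_from_to E src rv (freered rv xs) (tgt src rv x) w" "reduced_path rv (freered rv xs)"
    by auto
  show ?case
  proof (cases "freered rv xs")
    case Nil
    then show ?thesis using x IH by (simp add: reduced_path_def)
  next
    case (Cons y ys)
    then show ?thesis using x IH by (auto simp: tgt_rv reduced_path_Cons)
  qed
qed

lemma connected_reduced_path:
  assumes "connected_graph V E src rv" "u \<in> V" "w \<in> V"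
  obtains p where "path_from_to E src rv p u w" "reduced_path rv p"
  using assms freered_path_from_to unfolding connected_graph_def path_from_to_def[symmetric] by blast

lemma rotate_closed_path:
  assumes "path_from_to E src rv L q q" "cyclically_reduced rv L" "z \<in> set L"
  obtains L' where "path_from_to E src rv L' (src z) (src z)" "reduced_path rv L'"
    "hd L' = z" "set L' = set L"
proof -
  obtain as bs where L: "L = as @ z # bs"
    using assms(3) split_list by fast
  show thesis
  proof (rule that[of "(z # bs) @ as"])
    show "path_from_to E src rv ((z # bs) @ as) (src z) (src z)"
      using assms(1) unfolding L path_from_to_append
      by (metis path_from_to_Cons)
    show "reduced_path rv ((z # bs) @ as)"
      unfolding reduced_path_append[of rv "z # bs"]
      using assms(2) unfolding L cyclically_reduced_def reduced_path_append
      by (cases "as = []") auto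
  qed (auto simp: L)
qed

lemma conjugated_loop:
  assumes Q: "path_from_to E src rv Q p q" "reduced_path rv Q"
    and L: "path_from_to E src rv L q q" "reduced_path rv L" "L \<noteq> []"
    and junctions: "Q \<noteq> [] \<Longrightarrow> hd L \<noteq> rv (last Q) \<and> last L \<noteq> last Q"
  shows "Q @ L @ rev_path rv Q \<in> loops_at E src rv p"
proof -
  have QE: "set Q \<subseteq> E" using Q(1) unfolding path_from_to_def is_path_def by simp
  have LE: "set L \<subseteq> E" using L(1) unfolding path_from_to_def is_path_def by simp
  have "rv (last Q) \<noteq> rv (last L)" if "Q \<noteq> []"
    using junctions[OF that] rv_rv QE LE last_in_set[OF that] last_in_set[OF L(3)] by (metis subsetD)
  then have "reduced_path rv (L @ rev_path rv Q)"
    using L(2,3) reduced_path_rev_path[OF QE Q(2)] by (auto simp: reduced_path_append hd_rev_path)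
  then have "reduced_path rv (Q @ L @ rev_path rv Q)"
    using Q(2) L(3) junctions by (auto simp: reduced_path_append)
  moreover have "path_from_to E src rv (Q @ L @ rev_path rv Q) p p"
    using Q(1) L(1) path_from_to_rev_path[OF Q(1)] by (auto simp: path_from_to_append)
  ultimately show ?thesis unfolding loops_at_iff_path_from_to by simp
qed

lemma reduced_loop_through_repeated_edge:
  assumes conn: "connected_graph V E src rv" and p: "p \<in> V"
    and dd: "is_path E src rv (d # ys @ [d])" "reduced_path rv (d # ys @ [d])"
  obtains W where "W \<in> loops_at E src rv p" "d \<in> set W"
proof -
  let ?L = "d # ys"
  have "path_from_to E src rv (?L @ [d]) (src d) (tgt src rv d)"
    using is_path_imp_path_from_to[OF dd(1)] by simp
  then have L: "path_from_to E src rv ?L (src d) (src d)"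
    unfolding path_from_to_append by auto
  have "reduced_path rv (?L @ [d])" using dd(2) by simp
  then have cyc: "cyclically_reduced rv ?L"
    unfolding cyclically_reduced_def reduced_path_append by simp
  define S where "S = src ` set ?L"
  have d: "d \<in> E" "src d \<in> S" using dd(1) unfolding S_def is_path_def by auto
  obtain R where R: "path_from_to E src rv R p (src d)" "reduced_path rv R"
    using connected_reduced_path[OF conn p src_in_V[OF d(1)]] .
  obtain k q where q: "q \<in> S" "path_from_to E src rv (take k R) p q"
    and outside: "\<forall>y\<in>set (take k R). src y \<notin> S"
    using path_first_entry[OF R(1) d(2)] .
  define Q where "Q = take k R"
  obtain z where z: "z \<in> set ?L" "q = src z" using q(1) unfolding S_def by auto
  obtain L' where L': "path_from_to E src rv L' q q" "reduced_path rv L'" "hd L' = z" "set L' = set ?L"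
    using rotate_closed_path[OF L cyc z(1)] z(2) by metis
  \<comment> \<open>\<open>Q\<close> meets the vertices of the cycle only at its end, while every edge of the cycle ends
    on such a vertex; so the last edge of \<open>Q\<close> cannot backtrack at either junction.\<close>
  have "Q @ L' @ rev_path rv Q \<in> loops_at E src rv p"
  proof (rule conjugated_loop)
    assume "Q \<noteq> []"
    then have lastQ: "last Q \<in> E" "src (last Q) \<notin> S"
      using outside q(2) unfolding Q_def path_from_to_def is_path_def by (auto dest: last_in_set)
    have "tgt src rv z \<in> S"
      using tgt_in_path_sources[OF L z(1)] unfolding S_def by auto
    then have "hd L' \<noteq> rv (last Q)"
      using lastQ L'(3) rv_rv src_rv by metis
    moreover have "L' \<noteq> []" using L'(4) by auto
    then have "src (last L') \<in> S" using L'(4) unfolding S_def by (metis image_eqI last_in_set)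
    ultimately show "hd L' \<noteq> rv (last Q) \<and> last L' \<noteq> last Q" using lastQ by auto
  qed (use q(2) R(2) L' in \<open>auto simp: Q_def reduced_path_take\<close>)
  then show thesis using that L'(4) by auto
qed

lemma homotopy_equiv_covers_repeated_edge:
  assumes "connected_graph V E src rv" "is_morphism V E src rv g" "is_homotopy_equiv V E src rv g"
    and "is_path E src rv (d # ys @ [d])" "reduced_path rv (d # ys @ [d])"
  obtains x where "x \<in> E" "d \<in> set (snd g x)"
proof -
  have v: "src d \<in> V" using assms(4) src_in_V unfolding is_path_def by simp
  then have "fst g (src d) \<in> V" using assms(2) unfolding is_morphism_def by simp
  then obtain W where "W \<in> loops_at E src rv (fst g (src d))" "d \<in> set W"
    using reduced_loop_through_repeated_edge assms(1,4,5) by metis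
  then show thesis using homotopy_equiv_covers_loop[OF assms(3) v] that by blast
qed

end

section \<open>Reduced unfolding sequences\<close>

lemma decreasing_sets_common_element:
  fixes A :: "nat \<Rightarrow> 'a set"
  assumes fin: "finite (A N)" and ne: "\<And>m. N \<le> m \<Longrightarrow> A m \<noteq> {}"
    and dec: "\<And>m k. N \<le> m \<Longrightarrow> m \<le> k \<Longrightarrow> A k \<subseteq> A m"
  obtains y where "\<And>m. N \<le> m \<Longrightarrow> y \<in> A m"
proof -
  define m0 where "m0 = (ARG_MIN (\<lambda>m. card (A m)) m. N \<le> m)"
  have m0: "N \<le> m0" "\<And>m. N \<le> m \<Longrightarrow> card (A m0) \<le> card (A m)"
    using arg_min_nat_lemma[of "\<lambda>m. N \<le> m" N "\<lambda>m. card (A m)"] unfolding m0_def by auto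
  have fin0: "finite (A m0)" using finite_subset[OF dec[OF order_refl m0(1)] fin] .
  have stable: "A m = A m0" if "m0 \<le> m" for m
  proof (rule card_subset_eq[OF fin0 dec[OF m0(1) that]])
    show "card (A m) = card (A m0)"
      using card_mono[OF fin0 dec[OF m0(1) that]] m0(2)[of m] m0(1) that by simp
  qed
  obtain y where "y \<in> A m0" using ne[OF m0(1)] by blast
  then have "y \<in> A m" if "N \<le> m" for m
    using dec[OF that, of m0] stable[of m] that by (cases "m \<le> m0") auto
  then show thesis using that by blast
qed

locale reduced_unfolding =
  fixes V :: "'v set" and E :: "'e set" and src :: "'e \<Rightarrow> 'v" and rv :: "'e \<Rightarrow> 'e"
    and f :: "nat \<Rightarrow> ('v, 'e) gmap"
  assumes is_unfolding: "unfolding_seq V E src rv f"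
    and is_reduced: "reduced_seq V E src rv f"
begin

sublocale finite_graph V E src rv
  using is_unfolding unfolding unfolding_seq_def by unfold_locales simp

lemma connected: "connected_graph V E src rv"
  and rank_ge_2: "graph_rank V E \<ge> 2"
  and morphism_f: "is_morphism V E src rv (f k)"
  and homotopy_equiv_f: "is_homotopy_equiv V E src rv (f k)"
  and morphism_phi: "n < m \<Longrightarrow> is_morphism V E src rv (phi f n m)"
  using is_unfolding unfolding unfolding_seq_def by auto

lemma phi_nonempty: "x \<in> E \<Longrightarrow> snd (phi f n m) x \<noteq> []"
  using morphism_phi[of n m] by (cases "n < m") (auto simp: is_morphism_def phi_eq_gid gid_def)

lemma set_phi_subset: "x \<in> E \<Longrightarrow> set (snd (phi f n m) x) \<subseteq> E"
  using morphism_phi[of n m] by (cases "n < m") (auto simp: is_morphism_def is_path_def phi_eq_gid gid_def)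

lemma phi_rv: "x \<in> E \<Longrightarrow> snd (phi f n m) (rv x) = rev_path rv (snd (phi f n m) x)"
  using morphism_phi[of n m] by (cases "n < m") (auto simp: is_morphism_def phi_eq_gid gid_def)

lemma phi_reduced_path:
  "n < m \<Longrightarrow> x \<in> E \<Longrightarrow> is_path E src rv (snd (phi f n m) x) \<and> reduced_path rv (snd (phi f n m) x)"
  using morphism_phi[of n m] unfolding is_morphism_def by auto

text \<open>The edges satisfying \<open>P n\<close>, together with all vertices, form an invariant family of
  subgraphs.\<close>

lemma edge_family_dichotomy:
  assumes "n0 \<ge> 1"
    and rv_closed: "\<And>n x. x \<in> E \<Longrightarrow> P n x \<Longrightarrow> P n (rv x)"
    and invariant: "\<And>n m x y. n0 \<le> n \<Longrightarrow> n < m \<Longrightarrow> x \<in> E \<Longrightarrow> P m x \<Longrightarrow>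
                 y \<in> set (snd (phi f n m) x) \<Longrightarrow> P n y"
  shows "(\<forall>n\<ge>n0. \<forall>x\<in>E. P n x) \<or> (\<exists>M. \<forall>n\<ge>M. \<forall>x\<in>E. \<not> P n x)"
proof -
  define H where "H n = (V, {x \<in> E. P n x})" for n
  have "is_subgraph V E src rv (H n)" for n
    unfolding H_def is_subgraph_def using rv_in_E rv_closed src_in_V by auto
  moreover have "maps_into (phi f n m) (H m) (H n)" if "n0 \<le> n" "n < m" for n m
    using morphism_phi[OF that(2)] set_phi_subset invariant[OF that]
    unfolding maps_into_def H_def is_morphism_def by auto
  ultimately have "(\<forall>n\<ge>n0. H n = (V, E)) \<or> (\<exists>M. \<forall>n\<ge>M. snd (H n) = {})"
    using is_reduced assms(1) unfolding reduced_seq_def by blast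
  then show ?thesis unfolding H_def by auto
qed

lemma exists_other_edge:
  assumes "y \<in> E"
  obtains x where "x \<in> E" "x \<noteq> y" "x \<noteq> rv y"
proof (rule ccontr)
  assume "\<not> thesis"
  then have "E \<subseteq> {y, rv y}" using that by auto
  then have "card E \<le> card {y, rv y}" by (rule card_mono[rotated]) simp
  also have "\<dots> \<le> 2" by (simp add: card_insert_if)
  finally have "card E \<le> 2" .
  moreover have "card V \<ge> 1" using finite_V src_in_V[OF assms] by (metis One_nat_def Suc_leI card_gt_0_iff empty_iff)
  ultimately have "graph_rank V E \<le> 1" unfolding graph_rank_def by linarith
  then show False using rank_ge_2 by simp
qed

lemma phi_singleton_factor:
  assumes "N \<le> n" "n \<le> m" "x \<in> E" "length (snd (phi f N m) x) = 1"
  obtains z where "snd (phi f n m) x = [z]" "snd (phi f N n) z = snd (phi f N m) x"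
proof -
  let ?l = "snd (phi f n m) x"
  have "length ?l * 1 \<le> (\<Sum>y\<leftarrow>?l. length (snd (phi f N n) y))"
  proof (rule length_mult_le_sum_list)
    fix y assume "y \<in> set ?l"
    then have "y \<in> E" using set_phi_subset[OF assms(3)] by blast
    then show "1 \<le> length (snd (phi f N n) y)" using phi_nonempty by (simp add: Suc_le_eq)
  qed
  then have "length ?l \<le> 1" using length_phi_trans[OF assms(1,2), of f x] assms(4) by simp
  moreover have "?l \<noteq> []" using phi_nonempty[OF assms(3)] .
  ultimately obtain z where z: "?l = [z]" by (cases ?l) auto
  moreover have "snd (phi f N m) x = snd (phi f N n) z"
    using snd_phi_trans[OF assms(1,2), of f x] z by (simp add: path_image_def)
  ultimately show thesis using that by simp
qed

text \<open>The sets of single-edge images \<open>\<phi>\<^sub>N\<^sub>,\<^sub>m(x) = [y]\<close> decrease with \<open>m\<close>.\<close>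

lemma persistent_singleton_image:
  assumes short: "\<And>m. N \<le> m \<Longrightarrow> \<exists>x\<in>E. length (snd (phi f N m) x) \<le> 1"
  obtains y where "\<And>m. N \<le> m \<Longrightarrow> \<exists>x\<in>E. snd (phi f N m) x = [y]"
proof -
  define A where "A m = {y. \<exists>x\<in>E. snd (phi f N m) x = [y]}" for m
  have "finite (A N)" unfolding A_def using finite_E by simp
  moreover have "A m \<noteq> {}" if m: "N \<le> m" for m
  proof -
    obtain x where x: "x \<in> E" "length (snd (phi f N m) x) \<le> 1" using short[OF m] by blast
    then obtain y where "snd (phi f N m) x = [y]"
      using phi_nonempty[OF x(1)] by (cases "snd (phi f N m) x") auto
    then show ?thesis unfolding A_def using x(1) by blast
  qed
  moreover have "A k \<subseteq> A m" if mk: "N \<le> m" "m \<le> k" for m k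
  proof
    fix y assume "y \<in> A k"
    then obtain x where x: "x \<in> E" "snd (phi f N k) x = [y]" unfolding A_def by blast
    then obtain z where "snd (phi f m k) x = [z]" "snd (phi f N m) z = [y]"
      using phi_singleton_factor[OF mk x(1)] by auto
    moreover have "z \<in> E" using set_phi_subset[OF x(1), of m k] calculation(1) by auto
    ultimately show "y \<in> A m" unfolding A_def by blast
  qed
  ultimately obtain y where "\<And>m. N \<le> m \<Longrightarrow> y \<in> A m"
    using decreasing_sets_common_element by blast
  then show thesis using that unfolding A_def by blast
qed

lemma singleton_image_eventually_absent:
  assumes "1 \<le> N" "y \<in> E"
  obtains m where "N \<le> m" "\<forall>x\<in>E. snd (phi f N m) x \<noteq> [y]"
proof -
  define P where "P m x \<longleftrightarrow> snd (phi f N m) x = [y] \<or> snd (phi f N m) x = [rv y]" for m x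
  have "(\<forall>n\<ge>N. \<forall>x\<in>E. P n x) \<or> (\<exists>M. \<forall>n\<ge>M. \<forall>x\<in>E. \<not> P n x)"
  proof (rule edge_family_dichotomy[OF assms(1)])
    show "P n (rv x)" if "x \<in> E" "P n x" for n x
      using that phi_rv[OF that(1)] rv_rv[OF assms(2)] unfolding P_def by auto
    show "P n z" if nm: "N \<le> n" "n < m" and x: "x \<in> E" "P m x" "z \<in> set (snd (phi f n m) x)"
      for n m x z
    proof -
      have "length (snd (phi f N m) x) = 1" using x(2) unfolding P_def by auto
      then obtain z' where "snd (phi f n m) x = [z']" "snd (phi f N n) z' = snd (phi f N m) x"
        using phi_singleton_factor[OF nm(1) less_imp_le[OF nm(2)] x(1)] by blast
      then show ?thesis using x(2,3) unfolding P_def by simp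
    qed
  qed
  moreover obtain x where "x \<in> E" "x \<noteq> y" "x \<noteq> rv y" using exists_other_edge[OF assms(2)] .
  then have "\<not> P N x" unfolding P_def by simp
  ultimately obtain M where "\<forall>n\<ge>M. \<forall>x\<in>E. \<not> P n x" using \<open>x \<in> E\<close> by blast
  then show thesis using that[of "max M N"] unfolding P_def by simp
qed

lemma phi_length_ge_2:
  assumes "1 \<le> N"
  obtains m where "N \<le> m" "\<forall>x\<in>E. 2 \<le> length (snd (phi f N m) x)"
proof -
  have "\<exists>m\<ge>N. \<forall>x\<in>E. 2 \<le> length (snd (phi f N m) x)"
  proof (rule ccontr)
    assume neg: "\<not> ?thesis"
    have short: "\<exists>x\<in>E. length (snd (phi f N m) x) \<le> 1" if "N \<le> m" for m
    proof -
      from neg that obtain x where "x \<in> E" "length (snd (phi f N m) x) < 2" by (meson not_le)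
      then show ?thesis by (intro bexI[of _ x]) auto
    qed
    obtain y where y: "\<And>m. N \<le> m \<Longrightarrow> \<exists>x\<in>E. snd (phi f N m) x = [y]"
      using persistent_singleton_image[OF short] by blast
    have "y \<in> E" using y[of N] by auto
    obtain m where "N \<le> m" "\<forall>x\<in>E. snd (phi f N m) x \<noteq> [y]"
      using singleton_image_eventually_absent[OF assms \<open>y \<in> E\<close>] .
    then show False using y by blast
  qed
  then show thesis using that by blast
qed

lemma phi_length_unbounded:
  assumes "1 \<le> N"
  obtains m where "N \<le> m" "\<forall>x\<in>E. k < length (snd (phi f N m) x)"
proof (induction k arbitrary: thesis)
  case 0
  then show ?case using phi_nonempty[of _ N N] by blast
next
  case (Suc k)
  obtain m1 where m1: "N \<le> m1" "\<forall>x\<in>E. k < length (snd (phi f N m1) x)"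
    using Suc.IH by blast
  obtain m2 where m2: "m1 \<le> m2" "\<forall>x\<in>E. 2 \<le> length (snd (phi f m1 m2) x)"
    using phi_length_ge_2[of m1] m1(1) assms by auto
  have "Suc k < length (snd (phi f N m2) x)" if x: "x \<in> E" for x
  proof -
    let ?l = "snd (phi f m1 m2) x"
    have "length ?l * Suc k \<le> (\<Sum>y\<leftarrow>?l. length (snd (phi f N m1) y))"
      using set_phi_subset[OF x] m1(2) by (intro length_mult_le_sum_list) (auto simp: Suc_le_eq)
    moreover have "2 * Suc k \<le> length ?l * Suc k" using m2(2) x by (intro mult_le_mono1) simp
    ultimately show ?thesis using length_phi_trans[OF m1(1) m2(1), of f x] by simp
  qed
  then show ?case using Suc.prems[of m2] m1(1) m2(1) by simp
qed

lemma occ_undirected_phi_rv: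
  "c \<in> E \<Longrightarrow> x \<in> E \<Longrightarrow>
     occ_undirected rv c (snd (phi f n m) (rv x)) = occ_undirected rv c (snd (phi f n m) x)"
  using phi_rv occ_undirected_rev_path set_phi_subset by simp

lemma length_le_occ_undirected_phi:
  assumes "l \<le> n" "n \<le> m" "x \<in> E" "\<forall>y\<in>E. 0 < occ_undirected rv c (snd (phi f l n) y)"
  shows "length (snd (phi f n m) x) \<le> occ_undirected rv c (snd (phi f l m) x)"
  using length_mult_le_sum_list[of "snd (phi f n m) x" 1] set_phi_subset[OF assms(3)] assms(4)
  by (simp add: occ_undirected_phi_trans[OF assms(1,2)] Suc_le_eq subset_iff)

text \<open>The reduced path is \<open>\<phi>\<^sub>1\<^sub>,\<^sub>m(c)\<close> for large \<open>m\<close>.\<close>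

lemma repeated_in_reduced_path:
  assumes c: "c \<in> E"
  obtains d ys where "d = c \<or> d = rv c"
    "is_path E src rv (d # ys @ [d])" "reduced_path rv (d # ys @ [d])"
proof -
  define P where "P n x \<longleftrightarrow> occ_undirected rv c (snd (phi f 1 n) x) = 0" for n x
  have "(\<forall>n\<ge>1. \<forall>x\<in>E. P n x) \<or> (\<exists>M. \<forall>n\<ge>M. \<forall>x\<in>E. \<not> P n x)"
  proof (rule edge_family_dichotomy[OF order_refl])
    show "P n (rv x)" if "x \<in> E" "P n x" for n x
      using that occ_undirected_phi_rv[OF c] unfolding P_def by simp
    show "P n y" if "1 \<le> n" "n < m" "x \<in> E" "P m x" "y \<in> set (snd (phi f n m) x)" for n m x y
      using that occ_undirected_phi_trans[of 1 n m rv c f x] unfolding P_def by simp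
  qed
  moreover have "\<not> P 1 c" unfolding P_def occ_undirected_def by (simp add: gid_def)
  ultimately obtain M where M: "\<forall>n\<ge>M. \<forall>x\<in>E. \<not> P n x" using c by blast
  define M1 where "M1 = max M 1"
  have M1: "1 \<le> M1" "\<forall>y\<in>E. 0 < occ_undirected rv c (snd (phi f 1 M1) y)"
    using M unfolding M1_def P_def by auto
  obtain m where m: "M1 \<le> m" "\<forall>x\<in>E. 2 < length (snd (phi f M1 m) x)"
    using phi_length_unbounded[OF M1(1)] by blast
  define p where "p = snd (phi f 1 m) c"
  have "2 < occ_undirected rv c p"
    using length_le_occ_undirected_phi[OF M1(1) m(1) c M1(2)] m(2) c unfolding p_def by fastforce
  then have "2 \<le> occ [c] p \<or> 2 \<le> occ [rv c] p"
    using occ_undirected_le_occ[of rv c p] by linarith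
  then obtain d where d: "d = c \<or> d = rv c" "2 \<le> occ [d] p" by blast
  obtain xs ys zs where "p = xs @ d # ys @ d # zs" by (rule split_list_twice[OF d(2)])
  then have p: "p = xs @ (d # ys @ [d]) @ zs" by simp
  have "M1 \<noteq> m"
  proof
    assume "M1 = m"
    with m(2) c show False by simp
  qed
  then have "is_path E src rv p \<and> reduced_path rv p"
    using phi_reduced_path[of 1 m c] c m(1) M1(1) unfolding p_def by simp
  then have "is_path E src rv (d # ys @ [d])" "reduced_path rv (d # ys @ [d])"
    unfolding p using is_path_infix reduced_path_infix by blast+
  then show thesis using that d(1) by blast
qed

lemma f_covers_edge:
  assumes "c \<in> E"
  obtains x where "x \<in> E" "0 < occ_undirected rv c (snd (f k) x)"
proof -
  obtain d ys where "d = c \<or> d = rv c"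
    "is_path E src rv (d # ys @ [d])" "reduced_path rv (d # ys @ [d])"
    using repeated_in_reduced_path[OF assms] .
  moreover obtain x where "x \<in> E" "d \<in> set (snd (f k) x)"
    using homotopy_equiv_covers_repeated_edge[OF connected morphism_f homotopy_equiv_f] calculation(2,3) .
  ultimately show thesis
    using that unfolding occ_undirected_def by (metis (mono_tags) filter_empty_conv length_greater_0_conv)
qed

lemma occ_undirected_le_dichotomy:
  assumes "c \<in> E"
  shows "(\<forall>n\<ge>1. \<forall>x\<in>E. occ_undirected rv c (snd (phi f 0 n) x) \<le> T) \<or>
         (\<exists>M. \<forall>n\<ge>M. \<forall>x\<in>E. T < occ_undirected rv c (snd (phi f 0 n) x))"
proof -
  let ?P = "\<lambda>n x. occ_undirected rv c (snd (phi f 0 n) x) \<le> T"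
  have "(\<forall>n\<ge>1. \<forall>x\<in>E. ?P n x) \<or> (\<exists>M. \<forall>n\<ge>M. \<forall>x\<in>E. \<not> ?P n x)"
  proof (rule edge_family_dichotomy[OF order_refl])
    show "?P n (rv x)" if "x \<in> E" "?P n x" for n x
      using that occ_undirected_phi_rv[OF assms] by simp
    show "?P n y" if "1 \<le> n" "n < m" "x \<in> E" "?P m x" "y \<in> set (snd (phi f n m) x)" for n m x y
    proof -
      have "occ_undirected rv c (snd (phi f 0 n) y) \<le>
          (\<Sum>z\<leftarrow>snd (phi f n m) x. occ_undirected rv c (snd (phi f 0 n) z))"
        using that(5) by (auto intro!: member_le_sum_list)
      also have "\<dots> = occ_undirected rv c (snd (phi f 0 m) x)"
        using that(2) by (intro occ_undirected_phi_trans[symmetric]) simp_all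
      finally show ?thesis using that(4) by simp
    qed
  qed
  then show ?thesis by (simp add: not_le)
qed

lemma occ_undirected_eventually_positive:
  assumes "c \<in> E"
  obtains M where "\<forall>n\<ge>M. \<forall>x\<in>E. 0 < occ_undirected rv c (snd (phi f 0 n) x)"
proof -
  obtain x where "x \<in> E" "0 < occ_undirected rv c (snd (phi f 0 1) x)"
    using f_covers_edge[OF assms] by (metis One_nat_def snd_phi_Suc_self)
  then have "\<not> (\<forall>n\<ge>1. \<forall>x\<in>E. occ_undirected rv c (snd (phi f 0 n) x) \<le> 0)"
    by (meson order_refl not_le)
  then show thesis using occ_undirected_le_dichotomy[OF assms, of 0] that by blast
qed

lemma occ_undirected_eventually_exceeds:
  assumes "c \<in> E"
  obtains M where "\<forall>n\<ge>M. \<forall>x\<in>E. T < occ_undirected rv c (snd (phi f 0 n) x)"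
proof -
  obtain M where M: "\<forall>n\<ge>M. \<forall>x\<in>E. 0 < occ_undirected rv c (snd (phi f 0 n) x)"
    using occ_undirected_eventually_positive[OF assms] .
  define M1 where "M1 = max M 1"
  have M1: "1 \<le> M1" "\<forall>y\<in>E. 0 < occ_undirected rv c (snd (phi f 0 M1) y)"
    using M unfolding M1_def by auto
  obtain m where m: "M1 \<le> m" "\<forall>x\<in>E. T < length (snd (phi f M1 m) x)"
    using phi_length_unbounded[OF M1(1)] by blast
  have "T < occ_undirected rv c (snd (phi f 0 m) c)"
    using length_le_occ_undirected_phi[OF le0 m(1) assms M1(2)] m(2) assms by fastforce
  moreover have "1 \<le> m" using m(1) M1(1) by simp
  ultimately have "\<not> (\<forall>n\<ge>1. \<forall>x\<in>E. occ_undirected rv c (snd (phi f 0 n) x) \<le> T)"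
    using assms by (meson not_le)
  then show thesis using occ_undirected_le_dichotomy[OF assms, of T] that by blast
qed

end

theorem lemma4p2:
  fixes V :: "'v set" and E :: "'e set" and src :: "'e \<Rightarrow> 'v" and rv :: "'e \<Rightarrow> 'e"
    and f :: "nat \<Rightarrow> ('v, 'e) gmap"
  assumes "unfolding_seq V E src rv f"
    and "reduced_seq V E src rv f"
  shows "\<forall>e\<in>E. \<forall>e'\<in>E. \<forall>K::real. K > 0 \<longrightarrow>
           (\<exists>N::nat. N > 0 \<and> (\<forall>m. m > N \<longrightarrow>
              real (occ [e'] (snd (phi f 0 m) e) + occ [rv e'] (snd (phi f 0 m) e)) > K))"
proof (intro ballI allI impI)
  interpret reduced_unfolding V E src rv f
    using assms by (rule reduced_unfolding.intro)
  fix e e' and K :: real assume e: "e \<in> E" and e': "e' \<in> E"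
  obtain M where M: "\<forall>n\<ge>M. \<forall>x\<in>E. nat \<lceil>K\<rceil> < occ_undirected rv e' (snd (phi f 0 n) x)"
    using occ_undirected_eventually_exceeds[OF e'] by blast
  have "K < real (occ [e'] (snd (phi f 0 m) e) + occ [rv e'] (snd (phi f 0 m) e))" if "M \<le> m" for m
  proof -
    have "nat \<lceil>K\<rceil> < occ [e'] (snd (phi f 0 m) e) + occ [rv e'] (snd (phi f 0 m) e)"
      using M that e occ_undirected_eq_occ[of e' rv] rv_neq[OF e'] by metis
    then show ?thesis using real_nat_ceiling_ge[of K] by linarith
  qed
  then show "\<exists>N::nat. N > 0 \<and> (\<forall>m. m > N \<longrightarrow>
      real (occ [e'] (snd (phi f 0 m) e) + occ [rv e'] (snd (phi f 0 m) e)) > K)"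
    by (intro exI[of _ "Suc M"]) auto
qed

end
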